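(* For all $N\ge2$ and $2\le k\le N$, $$E\big[X_{k,N}^2(W_k-V_{k,N})^2\big]\le r\Big(\frac1{N^2}+\frac{2}{N^{1+r}k^{1-r}}\Big).$$
   Context: Fix $r\in(0,1)$. Multitype Yule process: at time $0$ a single individual of type $1$ is born; no deaths; each individual independently gives birth at rate $1$; a newborn has, independently, its parent's type with probability $1-r$ and otherwise a brand-new type. Individuals are numbered in order of birth (the initial one is the 1st); if the $k$-th individual born has a type different from its parent, that type is called type $k$. $T_N$ is the time the population reaches size $N$; $X_{k,N}$ is the fraction of individuals at time $T_N$ with type in $\{1,\dots,k\}$; $V_{k,N}$ is the fraction, among individuals at time $T_N$ with type in $\{1,\dots,k\}$, of those that have type $k$. $W_k=\lim_{N\to\infty}V_{k,N}$ (exists a.s.); the $W_k$ are independent, $W_1=1$, and for $k\ge2$, $P(W_k>0)=r$ and given $W_k>0$, $W_k\sim\mathrm{Beta}(1,k-1)$. *)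

theory Defs
  imports "HOL-Probability.Probability"
begin

text \<open>Embedded jump chain of the multitype Yule process.
  Individuals are numbered 1, 2, 3, ... in order of birth.  For n \<ge> 2,
  par n is the parent of individual n (an element of {1..n-1}) and
  mut n says whether individual n received a brand-new type.
  ytype par mut n is the type of individual n.\<close>

function ytype :: "(nat \<Rightarrow> nat) \<Rightarrow> (nat \<Rightarrow> bool) \<Rightarrow> nat \<Rightarrow> nat" where
  "ytype par mut n =
     (if n \<le> 1 then 1
      else if mut n then n
      else if 1 \<le> par n \<and> par n < n then ytype par mut (par n)
      else 1)"
  by pat_completeness auto
termination
  by (relation "Wellfounded.measure (\<lambda>(_, _, n). n)") auto

declare ytype.simps [simp del]

text \<open>X_{k,N}: fraction of the N individuals present at time T_N having type in {1..k}.\<close>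
definition Xfrac :: "(nat \<Rightarrow> nat) \<Rightarrow> (nat \<Rightarrow> bool) \<Rightarrow> nat \<Rightarrow> nat \<Rightarrow> real" where
  "Xfrac par mut k N =
     real (card {i \<in> {1..N}. ytype par mut i \<in> {1..k}}) / real N"

text \<open>V_{k,N}: among individuals at time T_N with type in {1..k}, fraction of type k.\<close>
definition Vfrac :: "(nat \<Rightarrow> nat) \<Rightarrow> (nat \<Rightarrow> bool) \<Rightarrow> nat \<Rightarrow> nat \<Rightarrow> real" where
  "Vfrac par mut k N =
     real (card {i \<in> {1..N}. ytype par mut i = k}) /
     real (card {i \<in> {1..N}. ytype par mut i \<in> {1..k}})"

definition Wlim :: "(nat \<Rightarrow> nat) \<Rightarrow> (nat \<Rightarrow> bool) \<Rightarrow> nat \<Rightarrow> real" where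
  "Wlim par mut k = lim (\<lambda>N. Vfrac par mut k N)"

end

theory Submission
  imports Defs
begin

text \<open>
  Let A_n and B_n be the numbers of individuals among the first n whose type lies in {1..k},
  resp. equals k, so that X_{k,N} = A_N / N and V_{k,N} = B_N / A_N. For n >= k, individual n + 1
  copies the type of a uniformly chosen individual with probability 1 - r, so (A, B) grows by
  (1, 1) with probability (1 - r) B / n, by (1, 0) with probability (1 - r) (A - B) / n, and stays
  put otherwise. Hence, for every constant c, (B/A - c)^2 + B (A - B) / (A^2 (A + 1)) is a
  martingale.

  With c = V_{k,N} this gives, for M >= N,
    E[A_N^2 (V_{k,M} - V_{k,N})^2] <= E[B_N (A_N - B_N) / (A_N + 1)] <= E[B_N]
      = r prod_{m=k}^{N-1} (1 + (1 - r) / m) <= 2 r (N/k)^(1-r).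
  With c = V_{k,n}, Ville's maximal inequality and E[1/A_n] <= (k/n)^((1-r)/2) / k show that
  V_{k,n} converges almost surely. So W_k is this limit, and dominated convergence lets M tend
  to infinity.

  Expectations over the first births are computed as finite sums over their possible histories.
\<close>

section \<open>Types and type counts\<close>

lemma ytype_ge_1: "1 \<le> ytype par mut i"
proof (induction i rule: less_induct)
  case (less i)
  then show ?case by (subst ytype.simps) auto
qed

lemma ytype_le: "1 \<le> i \<Longrightarrow> ytype par mut i \<le> i"
proof (induction i rule: less_induct)
  case (less i)
  show ?case
  proof (cases "i \<le> 1")
    case True
    then show ?thesis using less.prems by (subst ytype.simps) auto
  next
    case False
    then show ?thesis using less.IH[of "par i"] by (subst ytype.simps) auto
  qed
qed

lemma ytype_1 [simp]: "ytype par mut (Suc 0) = 1"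
  by (subst ytype.simps) simp

lemma ytype_cong:
  assumes "\<And>n. 2 \<le> n \<Longrightarrow> n \<le> i \<Longrightarrow> par n = par' n \<and> mut n = mut' n"
  shows "ytype par mut i = ytype par' mut' i"
  using assms
proof (induction i rule: less_induct)
  case (less i)
  show ?case
  proof (cases "i \<le> 1")
    case True
    then show ?thesis by (simp add: ytype.simps[of par _ i] ytype.simps[of par' _ i])
  next
    case False
    then have "par i = par' i" "mut i = mut' i" using less.prems[of i] by auto
    moreover have "ytype par mut (par i) = ytype par' mut' (par i)" if "par i < i"
      using less.IH[OF that] less.prems that by simp
    ultimately show ?thesis
      using False by (simp add: ytype.simps[of par _ i] ytype.simps[of par' _ i])
  qed
qed

definition type_count :: "(nat \<Rightarrow> nat) \<Rightarrow> (nat \<Rightarrow> bool) \<Rightarrow> nat set \<Rightarrow> nat \<Rightarrow> nat" where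
  "type_count par mut T n = card {i \<in> {1..n}. ytype par mut i \<in> T}"

lemma Xfrac_eq_type_count: "Xfrac par mut k N = real (type_count par mut {1..k} N) / real N"
  by (simp add: Xfrac_def type_count_def)

lemma Vfrac_eq_type_count:
  "Vfrac par mut k N = real (type_count par mut {k} N) / real (type_count par mut {1..k} N)"
  by (simp add: Vfrac_def type_count_def)

lemma type_count_cong:
  assumes "\<And>n. 2 \<le> n \<Longrightarrow> n \<le> N \<Longrightarrow> par n = par' n \<and> mut n = mut' n"
  shows "type_count par mut T N = type_count par' mut' T N"
proof -
  have "ytype par mut i = ytype par' mut' i" if "i \<in> {1..N}" for i
    by (rule ytype_cong) (use assms that in auto)
  then have "{i \<in> {1..N}. ytype par mut i \<in> T} = {i \<in> {1..N}. ytype par' mut' i \<in> T}"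
    by auto
  then show ?thesis unfolding type_count_def by simp
qed

lemma type_count_mono: "S \<subseteq> T \<Longrightarrow> type_count par mut S N \<le> type_count par mut T N"
  unfolding type_count_def by (rule card_mono) auto

lemma type_count_le: "type_count par mut T N \<le> N"
  unfolding type_count_def by (rule order_trans[OF card_mono[of "{1..N}"]]) auto

lemma type_count_pos: "1 \<in> T \<Longrightarrow> 1 \<le> N \<Longrightarrow> 1 \<le> type_count par mut T N"
proof -
  assume "1 \<in> T" "1 \<le> N"
  then have "1 \<in> {i \<in> {1..N}. ytype par mut i \<in> T}" by simp
  then have "{i \<in> {1..N}. ytype par mut i \<in> T} \<noteq> {}" by blast
  then have "0 < card {i \<in> {1..N}. ytype par mut i \<in> T}" by (simp add: card_gt_0_iff)
  then show ?thesis unfolding type_count_def by simp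
qed

lemma type_count_upto_self: "type_count par mut {1..k} k = k"
proof -
  have "ytype par mut i \<in> {1..k}" if "i \<in> {1..k}" for i
    using that ytype_ge_1[of par mut i] ytype_le[of i par mut] by auto
  then have "{i \<in> {1..k}. ytype par mut i \<in> {1..k}} = {1..k}" by blast
  then show ?thesis by (simp add: type_count_def)
qed

lemma type_count_new_type:
  assumes "2 \<le> k"
  shows "type_count par mut {k} k = (if mut k then 1 else 0)"
proof -
  have "i \<in> {1..k} \<and> ytype par mut i \<in> {k} \<longleftrightarrow> i = k \<and> mut k" for i
  proof (cases "i = k")
    case True
    then show ?thesis
      using assms ytype_le[of "par k" par mut] by (subst ytype.simps) auto
  next
    case False
    then show ?thesis using ytype_le[of i par mut] by auto
  qed
  then have "{i \<in> {1..k}. ytype par mut i \<in> {k}} = {i. i = k \<and> mut k}" by blast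
  also have "\<dots> = (if mut k then {k} else {})" by auto
  finally show ?thesis by (simp add: type_count_def)
qed

section \<open>Histories of the jump chain\<close>

text \<open>A history of length \<open>j\<close> lists the birth records (parent, whether the type is new)
  of individuals \<open>2, \<dots>, j + 1\<close>; the record of individual \<open>n\<close> sits at position \<open>n - 2\<close>.\<close>

definition hpar :: "(nat \<times> bool) list \<Rightarrow> nat \<Rightarrow> nat" where
  "hpar h n = fst (h ! (n - 2))"

definition hmut :: "(nat \<times> bool) list \<Rightarrow> nat \<Rightarrow> bool" where
  "hmut h n = snd (h ! (n - 2))"

definition hcount :: "(nat \<times> bool) list \<Rightarrow> nat set \<Rightarrow> nat \<Rightarrow> real" where
  "hcount h T n = real (type_count (hpar h) (hmut h) T n)"

lemma hpar_hmut_append: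
  "2 \<le> n \<Longrightarrow> n \<le> length h + 1 \<Longrightarrow> hpar (h @ xs) n = hpar h n \<and> hmut (h @ xs) n = hmut h n"
  by (simp add: hpar_def hmut_def nth_append less_diff_conv2)

lemma hcount_append:
  assumes "n \<le> length h + 1"
  shows "hcount (h @ xs) T n = hcount h T n"
proof -
  have "type_count (hpar (h @ xs)) (hmut (h @ xs)) T n = type_count (hpar h) (hmut h) T n"
    by (rule type_count_cong) (use assms hpar_hmut_append in simp)
  then show ?thesis by (simp add: hcount_def)
qed

lemma hcount_nonneg: "0 \<le> hcount h T n"
  by (simp add: hcount_def)

lemma hcount_mono: "S \<subseteq> T \<Longrightarrow> hcount h S n \<le> hcount h T n"
  by (simp add: hcount_def type_count_mono)

lemma hcount_ge_1: "1 \<in> T \<Longrightarrow> 1 \<le> n \<Longrightarrow> 1 \<le> hcount h T n"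
  using type_count_pos by (fastforce simp: hcount_def)

definition birth_prob :: "real \<Rightarrow> nat \<Rightarrow> nat \<times> bool \<Rightarrow> real" where
  "birth_prob r n x =
     (if fst x \<in> {1..n-1} then 1 / real (n - 1) else 0) * (if snd x then r else 1 - r)"

definition hist_prob :: "real \<Rightarrow> (nat \<times> bool) list \<Rightarrow> real" where
  "hist_prob r h = (\<Prod>i<length h. birth_prob r (i + 2) (h ! i))"

fun histories :: "nat \<Rightarrow> (nat \<times> bool) list set" where
  "histories 0 = {[]}"
| "histories (Suc j) = (\<lambda>(h, x). h @ [x]) ` (histories j \<times> ({1..j+1} \<times> UNIV))"

text \<open>\<open>next_expect r j\<close> averages over the record of individual \<open>j + 2\<close>, the one appended to a
  history of length \<open>j\<close>.\<close>

definition next_expect :: "real \<Rightarrow> nat \<Rightarrow> (nat \<times> bool \<Rightarrow> real) \<Rightarrow> real" where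
  "next_expect r j g = (\<Sum>x\<in>{1..j+1} \<times> UNIV. birth_prob r (j + 2) x * g x)"

definition hist_expect :: "real \<Rightarrow> nat \<Rightarrow> ((nat \<times> bool) list \<Rightarrow> real) \<Rightarrow> real" where
  "hist_expect r j G = (\<Sum>h\<in>histories j. hist_prob r h * G h)"

lemma finite_histories: "finite (histories j)"
  by (induction j) auto

lemma length_histories: "h \<in> histories j \<Longrightarrow> length h = j"
  by (induction j arbitrary: h) auto

lemma birth_prob_nonneg: "0 \<le> r \<Longrightarrow> r \<le> 1 \<Longrightarrow> 0 \<le> birth_prob r n x"
  unfolding birth_prob_def by auto

lemma hist_prob_nonneg: "0 \<le> r \<Longrightarrow> r \<le> 1 \<Longrightarrow> 0 \<le> hist_prob r h"
  unfolding hist_prob_def by (intro prod_nonneg) (auto simp: birth_prob_nonneg)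

lemma hist_prob_snoc: "hist_prob r (h @ [x]) = hist_prob r h * birth_prob r (length h + 2) x"
  unfolding hist_prob_def by (simp add: nth_append)

lemma next_expect_eq:
  "next_expect r j g = (\<Sum>p=1..j+1. r * g (p, True) + (1 - r) * g (p, False)) / real (j + 1)"
proof -
  have "next_expect r j g = (\<Sum>p=1..j+1. \<Sum>b\<in>UNIV. birth_prob r (j + 2) (p, b) * g (p, b))"
    using sum.cartesian_product[of "\<lambda>p b. birth_prob r (j + 2) (p, b) * g (p, b)" UNIV "{1..j+1}"]
    by (simp add: next_expect_def)
  also have "\<dots> = (\<Sum>p=1..j+1. (r * g (p, True) + (1 - r) * g (p, False)) / real (j + 1))"
    by (intro sum.cong) (auto simp: UNIV_bool birth_prob_def add_divide_distrib)
  finally show ?thesis by (simp only: sum_divide_distrib)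
qed

lemma next_expect_const [simp]: "next_expect r j (\<lambda>_. c) = c"
proof -
  have "(\<Sum>p=1..j+1. r * c + (1 - r) * c) = real (j + 1) * c"
    by (simp add: algebra_simps)
  then show ?thesis by (simp add: next_expect_eq)
qed

lemma next_expect_cmult: "next_expect r j (\<lambda>x. c * g x) = c * next_expect r j g"
  unfolding next_expect_def by (simp add: sum_distrib_left mult.left_commute)

lemma next_expect_mono:
  "0 \<le> r \<Longrightarrow> r \<le> 1 \<Longrightarrow> (\<And>x. g x \<le> g' x) \<Longrightarrow> next_expect r j g \<le> next_expect r j g'"
  unfolding next_expect_def by (intro sum_mono mult_left_mono) (auto simp: birth_prob_nonneg)

lemma hist_expect_Suc:
  "hist_expect r (Suc j) G = hist_expect r j (\<lambda>h. next_expect r j (\<lambda>x. G (h @ [x])))"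
proof -
  have inj: "inj_on (\<lambda>(h, x). h @ [x]) (histories j \<times> ({1..j+1} \<times> (UNIV :: bool set)))"
    by (rule inj_onI) auto
  have "hist_expect r (Suc j) G
      = (\<Sum>(h, x)\<in>histories j \<times> ({1..j+1} \<times> UNIV). hist_prob r (h @ [x]) * G (h @ [x]))"
    unfolding hist_expect_def histories.simps(2) by (subst sum.reindex[OF inj]) (auto intro!: sum.cong)
  also have "\<dots> = (\<Sum>h\<in>histories j. \<Sum>x\<in>{1..j+1} \<times> UNIV. hist_prob r (h @ [x]) * G (h @ [x]))"
    by (rule sum.cartesian_product[symmetric])
  also have "\<dots> = hist_expect r j (\<lambda>h. next_expect r j (\<lambda>x. G (h @ [x])))"
    unfolding hist_expect_def next_expect_def
    by (intro sum.cong refl) (simp add: hist_prob_snoc length_histories sum_distrib_left mult.assoc)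
  finally show ?thesis .
qed

lemma hist_expect_const [simp]: "hist_expect r j (\<lambda>_. c) = c"
proof (induction j)
  case 0
  then show ?case by (simp add: hist_expect_def hist_prob_def)
next
  case (Suc j)
  then show ?case by (simp add: hist_expect_Suc)
qed

lemma hist_expect_cong:
  "(\<And>h. h \<in> histories j \<Longrightarrow> G h = G' h) \<Longrightarrow> hist_expect r j G = hist_expect r j G'"
  unfolding hist_expect_def by (intro sum.cong) auto

lemma hist_expect_mono:
  "0 \<le> r \<Longrightarrow> r \<le> 1 \<Longrightarrow> (\<And>h. h \<in> histories j \<Longrightarrow> G h \<le> G' h) \<Longrightarrow>
   hist_expect r j G \<le> hist_expect r j G'"
  unfolding hist_expect_def by (intro sum_mono mult_left_mono) (auto simp: hist_prob_nonneg)

lemma hist_expect_cmult: "hist_expect r j (\<lambda>h. c * G h) = c * hist_expect r j G"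
  by (simp add: hist_expect_def sum_distrib_left mult.left_commute)

section \<open>Dynamics of the type counts\<close>

lemma ytype_snoc_old:
  "i \<le> length h + 1 \<Longrightarrow> ytype (hpar (h @ [x])) (hmut (h @ [x])) i = ytype (hpar h) (hmut h) i"
  by (rule ytype_cong) (use hpar_hmut_append in simp)

lemma ytype_snoc_new:
  assumes "length h = j" "fst x \<in> {1..j+1}"
  shows "ytype (hpar (h @ [x])) (hmut (h @ [x])) (j + 2)
       = (if snd x then j + 2 else ytype (hpar h) (hmut h) (fst x))"
proof -
  have "hpar (h @ [x]) (j + 2) = fst x" "hmut (h @ [x]) (j + 2) = snd x"
    using assms(1) by (simp_all add: hpar_def hmut_def nth_append)
  then show ?thesis
    using assms ytype_snoc_old[of "fst x" h x] by (subst ytype.simps) auto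
qed

lemma hcount_snoc:
  assumes "length h = j" "fst x \<in> {1..j+1}" "j + 2 \<notin> T"
  shows "hcount (h @ [x]) T (j + 2)
       = hcount h T (j + 1) + (if \<not> snd x \<and> ytype (hpar h) (hmut h) (fst x) \<in> T then 1 else 0)"
proof -
  let ?t = "ytype (hpar (h @ [x])) (hmut (h @ [x]))"
  have old: "{i \<in> {1..j+1}. ?t i \<in> T} = {i \<in> {1..j+1}. ytype (hpar h) (hmut h) i \<in> T}"
    using ytype_snoc_old[of _ h x] assms(1) by auto
  have "{i \<in> {1..j+2}. ?t i \<in> T} = {i \<in> {1..j+1}. ?t i \<in> T} \<union> (if ?t (j + 2) \<in> T then {j + 2} else {})"
    by (auto simp: le_Suc_eq)
  then have "card {i \<in> {1..j+2}. ?t i \<in> T}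
      = card {i \<in> {1..j+1}. ytype (hpar h) (hmut h) i \<in> T} + (if ?t (j + 2) \<in> T then 1 else 0)"
    unfolding old by (simp add: card_Un_disjoint)
  then show ?thesis
    using ytype_snoc_new[OF assms(1,2)] assms(3) by (simp add: hcount_def type_count_def)
qed

lemma sum_if_const: "finite A \<Longrightarrow> (\<Sum>x\<in>A. if P x then c else 0) = of_nat (card {x \<in> A. P x}) * c"
  by (simp add: sum.inter_filter[symmetric])

text \<open>Up to the factor \<open>(1 - r) / n\<close>, the generator of the pair of counts \<open>(a, b)\<close> of
  individuals with type in \<open>T\<close> and in \<open>S \<subseteq> T\<close>: the next individual copies one of the \<open>n\<close>
  present individuals and keeps its type with probability \<open>1 - r\<close>.\<close>

definition count_generator :: "(real \<Rightarrow> real \<Rightarrow> real) \<Rightarrow> real \<Rightarrow> real \<Rightarrow> real" where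
  "count_generator F a b = a * (F (a + 1) b - F a b) + b * (F (a + 1) (b + 1) - F (a + 1) b)"

lemma next_expect_counts:
  assumes "length h = j" "S \<subseteq> T" "j + 2 \<notin> T"
  shows "next_expect r j (\<lambda>x. F (hcount (h @ [x]) T (j + 2)) (hcount (h @ [x]) S (j + 2)))
       = F (hcount h T (j + 1)) (hcount h S (j + 1))
         + (1 - r) / real (j + 1) * count_generator F (hcount h T (j + 1)) (hcount h S (j + 1))"
proof -
  define a where "a = hcount h T (j + 1)"
  define b where "b = hcount h S (j + 1)"
  let ?t = "ytype (hpar h) (hmut h)"
  let ?G = "\<lambda>x. F (hcount (h @ [x]) T (j + 2)) (hcount (h @ [x]) S (j + 2))"
  let ?IT = "\<lambda>p. if ?t p \<in> T then F (a + 1) b - F a b else 0"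
  let ?IS = "\<lambda>p. if ?t p \<in> S then F (a + 1) (b + 1) - F (a + 1) b else 0"
  have "j + 2 \<notin> S" using assms by auto
  then have new: "?G (p, True) = F a b" and old: "?G (p, False) = F a b + ?IT p + ?IS p"
    if "p \<in> {1..j+1}" for p
    using hcount_snoc[OF assms(1), of "(p, _)"] assms(2,3) that by (auto simp: a_def b_def)
  have sum_T: "(\<Sum>p=1..j+1. ?IT p) = a * (F (a + 1) b - F a b)"
    unfolding sum_if_const[OF finite_atLeastAtMost] a_def hcount_def type_count_def ..
  have sum_S: "(\<Sum>p=1..j+1. ?IS p) = b * (F (a + 1) (b + 1) - F (a + 1) b)"
    unfolding sum_if_const[OF finite_atLeastAtMost] b_def hcount_def type_count_def ..
  have "(\<Sum>p=1..j+1. r * ?G (p, True) + (1 - r) * ?G (p, False))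
      = (\<Sum>p=1..j+1. F a b + (1 - r) * ?IT p + (1 - r) * ?IS p)"
    using new old by (intro sum.cong) (simp_all add: algebra_simps)
  also have "\<dots> = real (j + 1) * F a b + (1 - r) * (\<Sum>p=1..j+1. ?IT p) + (1 - r) * (\<Sum>p=1..j+1. ?IS p)"
    by (simp only: sum.distrib sum_distrib_left[symmetric] sum_constant) simp
  also have "\<dots> = real (j + 1) * F a b + (1 - r) * count_generator F a b"
    unfolding sum_T sum_S count_generator_def by (simp add: algebra_simps)
  finally show ?thesis
    unfolding next_expect_eq a_def b_def by (simp add: field_simps)
qed

lemma hist_expect_Suc_counts:
  assumes "S \<subseteq> T" "j + 2 \<notin> T" "\<And>h x. h \<in> histories j \<Longrightarrow> F (h @ [x]) = F h"
  shows "hist_expect r (Suc j) (\<lambda>h. F h (hcount h T (j + 2)) (hcount h S (j + 2)))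
       = hist_expect r j (\<lambda>h. F h (hcount h T (j + 1)) (hcount h S (j + 1))
           + (1 - r) / real (j + 1) * count_generator (F h) (hcount h T (j + 1)) (hcount h S (j + 1)))"
  unfolding hist_expect_Suc
proof (intro hist_expect_cong)
  fix h assume "h \<in> histories j"
  then show "next_expect r j (\<lambda>x. F (h @ [x]) (hcount (h @ [x]) T (j + 2)) (hcount (h @ [x]) S (j + 2)))
      = F h (hcount h T (j + 1)) (hcount h S (j + 1))
        + (1 - r) / real (j + 1) * count_generator (F h) (hcount h T (j + 1)) (hcount h S (j + 1))"
    using next_expect_counts[OF length_histories assms(1,2)] assms(3) by simp
qed

lemma count_generator_snd [simp]: "count_generator (\<lambda>_ b. b) a b = b"
  by (simp add: count_generator_def)

lemma count_generator_inverse: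
  assumes "0 < a"
  shows "count_generator (\<lambda>a _. 1 / a) a b = - 1 / (a + 1)"
  using assms add_pos_pos[OF assms mult_pos_pos[OF assms assms]]
  by (simp add: count_generator_def field_simps)

lemma hist_expect_count_type:
  assumes "2 \<le> k" "k \<le> N"
  shows "hist_expect r (N - 1) (\<lambda>h. hcount h {k} N) = r * (\<Prod>m=k..<N. 1 + (1 - r) / real m)"
  using assms(2)
proof (induction N rule: dec_induct)
  case base
  define j where "j = k - 2"
  have j: "k = j + 2" using assms(1) by (simp add: j_def)
  have "hcount (h @ [x]) {k} k = (if snd x then 1 else 0)" if "length h = j" for h x
    using type_count_new_type[OF assms(1)] that j by (simp add: hcount_def hmut_def nth_append)
  then have "hist_expect r (Suc j) (\<lambda>h. hcount h {k} k) = hist_expect r j (\<lambda>_. r)"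
    unfolding hist_expect_Suc by (intro hist_expect_cong) (simp add: length_histories next_expect_eq)
  then show ?case by (simp add: j)
next
  case (step n)
  define j where "j = n - 1"
  have j: "n = j + 1" using step.hyps assms(1) by (simp add: j_def)
  have "hist_expect r (Suc n - 1) (\<lambda>h. hcount h {k} (Suc n))
      = hist_expect r j (\<lambda>h. hcount h {k} (j + 1) + (1 - r) / real (j + 1) * hcount h {k} (j + 1))"
    using hist_expect_Suc_counts[where F="\<lambda>_ _ b. b" and S="{k}" and T="{1..k}" and j=j and r=r]
      step.hyps assms by (simp add: j)
  also have "\<dots> = (1 + (1 - r) / real n) * hist_expect r (n - 1) (\<lambda>h. hcount h {k} n)"
    by (simp add: j hist_expect_cmult[symmetric] algebra_simps)
  also have "\<dots> = r * (\<Prod>m=k..<Suc n. 1 + (1 - r) / real m)"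
    unfolding step.IH using step.hyps by (simp add: prod.atLeastLessThan_Suc)
  finally show ?case .
qed

lemma hist_expect_inverse_count_le:
  assumes "1 \<le> k" "k \<le> n" "0 \<le> r" "r \<le> 1"
  shows "hist_expect r (n - 1) (\<lambda>h. 1 / hcount h {1..k} n)
       \<le> (\<Prod>m=k..<n. 1 - (1 - r) / (2 * real m)) / real k"
  using assms(2)
proof (induction n rule: dec_induct)
  case base
  have "hcount h {1..k} k = real k" for h
    by (simp only: hcount_def type_count_upto_self)
  then show ?case by simp
next
  case (step n)
  define j where "j = n - 1"
  have j: "n = j + 1" using step.hyps assms(1) by (simp add: j_def)
  define c where "c = (1 - r) / real n"
  have c: "0 \<le> c" "c \<le> 1" using assms step.hyps by (auto simp: c_def)
  have "hist_expect r (Suc n - 1) (\<lambda>h. 1 / hcount h {1..k} (Suc n))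
      = hist_expect r j (\<lambda>h. 1 / hcount h {1..k} n + c * count_generator (\<lambda>a _. 1 / a) (hcount h {1..k} n) (hcount h {k} n))"
    using hist_expect_Suc_counts[where F="\<lambda>_ a _. 1 / a" and S="{k}" and T="{1..k}" and j=j and r=r]
      step.hyps assms by (simp add: j c_def)
  also have "\<dots> \<le> hist_expect r j (\<lambda>h. (1 - c / 2) * (1 / hcount h {1..k} n))"
  proof (rule hist_expect_mono[OF assms(3,4)])
    fix h
    define a where "a = hcount h {1..k} n"
    have "1 \<le> a" using assms step.hyps by (simp add: a_def hcount_ge_1)
    moreover have "c \<le> a * c" using mult_right_mono[OF \<open>1 \<le> a\<close> c(1)] by simp
    ultimately have "c / 2 * (1 / a) \<le> c * (1 / (a + 1))"
      by (simp add: field_simps)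
    then show "1 / a + c * count_generator (\<lambda>a _. 1 / a) a (hcount h {k} n) \<le> (1 - c / 2) * (1 / a)"
      using \<open>1 \<le> a\<close> by (simp add: count_generator_inverse algebra_simps)
  qed
  also have "\<dots> = (1 - c / 2) * hist_expect r (n - 1) (\<lambda>h. 1 / hcount h {1..k} n)"
    unfolding hist_expect_cmult by (simp add: j)
  also have "\<dots> \<le> (1 - c / 2) * ((\<Prod>m=k..<n. 1 - (1 - r) / (2 * real m)) / real k)"
    using c by (intro mult_left_mono step.IH) auto
  also have "\<dots> = (\<Prod>m=k..<Suc n. 1 - (1 - r) / (2 * real m)) / real k"
    using step.hyps by (simp add: prod.atLeastLessThan_Suc c_def)
  finally show ?case .
qed

section \<open>The martingale\<close>

definition mart_corr :: "real \<Rightarrow> real \<Rightarrow> real" where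
  "mart_corr a b = b * (a - b) / (a\<^sup>2 * (a + 1))"

definition mart :: "real \<Rightarrow> real \<Rightarrow> real \<Rightarrow> real" where
  "mart c a b = (b / a - c)\<^sup>2 + mart_corr a b"

lemma count_generator_mart:
  assumes "0 < a"
  shows "count_generator (mart c) a b = 0"
proof -
  have mart_eq: "mart c a' b' = ((b' - c * a')\<^sup>2 * (a' + 1) + b' * (a' - b')) / (a'\<^sup>2 * (a' + 1))"
    if "0 < a'" for a' b'
  proof -
    have "b' / a' - c = (b' - c * a') / a'" using that by (simp add: field_simps)
    then have "(b' / a' - c)\<^sup>2 = (b' - c * a')\<^sup>2 * (a' + 1) / (a'\<^sup>2 * (a' + 1))"
      using that by (simp add: power_divide)
    then show ?thesis by (simp add: mart_def mart_corr_def add_divide_distrib)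
  qed
  have "0 < a + 1" using assms by simp
  then show ?thesis
    using assms unfolding count_generator_def mart_eq[OF assms] mart_eq[OF \<open>0 < a + 1\<close>]
    by (simp add: divide_simps power2_eq_square) (simp add: algebra_simps)
qed

lemma mart_corr_nonneg: "0 \<le> b \<Longrightarrow> b \<le> a \<Longrightarrow> 0 \<le> mart_corr a b"
  unfolding mart_corr_def by simp

lemma mart_corr_le:
  assumes "1 \<le> a" "0 \<le> b" "b \<le> a"
  shows "mart_corr a b \<le> 1 / a"
proof -
  have "b * (a - b) \<le> a * a" using assms by (intro mult_mono) auto
  then have "mart_corr a b \<le> a * a / (a\<^sup>2 * (a + 1))"
    unfolding mart_corr_def using assms by (intro divide_right_mono) auto
  also have "\<dots> = 1 / (a + 1)" using assms by (simp add: power2_eq_square)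
  also have "\<dots> \<le> 1 / a" using assms by (simp add: frac_le)
  finally show ?thesis .
qed

definition hshare :: "nat \<Rightarrow> (nat \<times> bool) list \<Rightarrow> nat \<Rightarrow> real" where
  "hshare k h n = hcount h {k} n / hcount h {1..k} n"

definition hmart :: "nat \<Rightarrow> nat \<Rightarrow> (nat \<times> bool) list \<Rightarrow> nat \<Rightarrow> real" where
  "hmart k n h m = mart (hshare k h n) (hcount h {1..k} m) (hcount h {k} m)"

lemma hshare_append: "n \<le> length h + 1 \<Longrightarrow> hshare k (h @ xs) n = hshare k h n"
  by (simp add: hshare_def hcount_append)

lemma hmart_append:
  "n \<le> length h + 1 \<Longrightarrow> m \<le> length h + 1 \<Longrightarrow> hmart k n (h @ xs) m = hmart k n h m"
  by (simp add: hmart_def hshare_append hcount_append)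

lemma sq_hshare_diff_le_hmart:
  "1 \<le> k \<Longrightarrow> (hshare k h m - hshare k h n)\<^sup>2 \<le> hmart k n h m"
  unfolding hmart_def mart_def hshare_def
  by (simp add: mart_corr_nonneg hcount_nonneg hcount_mono)

lemma hmart_nonneg: "1 \<le> k \<Longrightarrow> 0 \<le> hmart k n h m"
  using sq_hshare_diff_le_hmart by (meson order_trans zero_le_power2)

lemma next_expect_hmart:
  assumes "length h = j" "1 \<le> k" "k \<le> j + 1" "n \<le> j + 1"
  shows "next_expect r j (\<lambda>x. hmart k n (h @ [x]) (j + 2)) = hmart k n h (j + 1)"
proof -
  have "0 < hcount h {1..k} (j + 1)"
    using assms(2) by (intro order_less_le_trans[OF zero_less_one hcount_ge_1]) auto
  then show ?thesis
    using next_expect_counts[OF assms(1), of "{k}" "{1..k}" r "mart (hshare k h n)"] assms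
    by (simp add: hmart_def hshare_append count_generator_mart)
qed

lemma hist_expect_hmart:
  assumes "1 \<le> k" "k \<le> N" "N \<le> L"
  shows "hist_expect r (L - 1) (\<lambda>h. (hcount h {1..k} N)\<^sup>2 * hmart k N h L)
       = hist_expect r (N - 1) (\<lambda>h. (hcount h {1..k} N)\<^sup>2 * hmart k N h N)"
  using assms(3)
proof (induction L rule: dec_induct)
  case base
  then show ?case by simp
next
  case (step L)
  define j where "j = L - 1"
  have j: "L = j + 1" using step.hyps assms by (simp add: j_def)
  let ?G = "\<lambda>L h. (hcount h {1..k} N)\<^sup>2 * hmart k N h L"
  have "next_expect r j (\<lambda>x. ?G (Suc (Suc j)) (h @ [x])) = ?G (Suc j) h" if "h \<in> histories j" for h
  proof -
    have "length h = j" using that by (rule length_histories)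
    then show ?thesis
      using next_expect_hmart[OF \<open>length h = j\<close> assms(1)] hcount_append[of N h] step.hyps assms
      by (simp add: j next_expect_cmult)
  qed
  then have "hist_expect r (Suc j) (?G (Suc (Suc j))) = hist_expect r j (?G (Suc j))"
    using hist_expect_Suc[of r j "?G (Suc (Suc j))"] by (simp cong: hist_expect_cong)
  then show ?case using step.IH by (simp add: j)
qed

lemma hist_expect_sq_dev_le:
  assumes "1 \<le> k" "k \<le> N" "N \<le> L" "0 \<le> r" "r \<le> 1"
  shows "hist_expect r (L - 1) (\<lambda>h. (hcount h {1..k} N)\<^sup>2 * (hshare k h L - hshare k h N)\<^sup>2)
       \<le> hist_expect r (N - 1) (\<lambda>h. hcount h {k} N)"
proof -
  have "hist_expect r (L - 1) (\<lambda>h. (hcount h {1..k} N)\<^sup>2 * (hshare k h L - hshare k h N)\<^sup>2)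
      \<le> hist_expect r (L - 1) (\<lambda>h. (hcount h {1..k} N)\<^sup>2 * hmart k N h L)"
    using assms sq_hshare_diff_le_hmart by (intro hist_expect_mono mult_left_mono) auto
  also have "\<dots> = hist_expect r (N - 1) (\<lambda>h. (hcount h {1..k} N)\<^sup>2 * hmart k N h N)"
    by (rule hist_expect_hmart[OF assms(1-3)])
  also have "\<dots> \<le> hist_expect r (N - 1) (\<lambda>h. hcount h {k} N)"
  proof (rule hist_expect_mono[OF assms(4,5)])
    fix h
    define a b where "a = hcount h {1..k} N" and "b = hcount h {k} N"
    have "1 \<le> a" "0 \<le> b" "b \<le> a"
      using assms by (simp_all add: a_def b_def hcount_ge_1 hcount_nonneg hcount_mono)
    then have "a\<^sup>2 * mart_corr a b = b * (a - b) / (a + 1)"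
      by (simp add: mart_corr_def power2_eq_square)
    also have "\<dots> \<le> b"
      using \<open>1 \<le> a\<close> \<open>0 \<le> b\<close> \<open>b \<le> a\<close> by (simp add: divide_le_eq mult_left_mono)
    finally show "a\<^sup>2 * hmart k N h N \<le> b"
      by (simp add: hmart_def mart_def hshare_def a_def b_def)
  qed
  finally show ?thesis .
qed

text \<open>\<open>Z\<close> stopped at level \<open>l\<close> after time \<open>n\<close>; a supermartingale whenever \<open>Z\<close> is one, which
  yields Ville's maximal inequality.\<close>

definition stopped_at_level ::
    "((nat \<times> bool) list \<Rightarrow> nat \<Rightarrow> real) \<Rightarrow> nat \<Rightarrow> real \<Rightarrow> nat \<Rightarrow> (nat \<times> bool) list \<Rightarrow> real" where
  "stopped_at_level Z n l L h = (if \<exists>m\<in>{n..L+1}. l \<le> Z h m then l else Z h (L + 1))"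

lemma next_expect_stopped_at_level_le:
  assumes "0 \<le> r" "r \<le> 1" "length h = L"
    and adapted: "\<And>x m. m \<le> L + 1 \<Longrightarrow> Z (h @ [x]) m = Z h m"
    and super: "next_expect r L (\<lambda>x. Z (h @ [x]) (L + 2)) \<le> Z h (L + 1)"
  shows "next_expect r L (\<lambda>x. stopped_at_level Z n l (Suc L) (h @ [x])) \<le> stopped_at_level Z n l L h"
proof (cases "\<exists>m\<in>{n..L+1}. l \<le> Z h m")
  case True
  then obtain m where "m \<in> {n..L+1}" "l \<le> Z h m" by blast
  have "stopped_at_level Z n l (Suc L) (h @ [x]) = l" for x
  proof -
    have "m \<in> {n..Suc L + 1}" "l \<le> Z (h @ [x]) m"
      using \<open>m \<in> {n..L+1}\<close> \<open>l \<le> Z h m\<close> adapted[of m x] by auto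
    then show ?thesis unfolding stopped_at_level_def by auto
  qed
  then show ?thesis using True by (simp add: stopped_at_level_def)
next
  case False
  have "stopped_at_level Z n l (Suc L) (h @ [x]) \<le> Z (h @ [x]) (L + 2)" for x
  proof (cases "\<exists>m\<in>{n..Suc L + 1}. l \<le> Z (h @ [x]) m")
    case True
    then obtain m where m: "m \<in> {n..L+2}" "l \<le> Z (h @ [x]) m" by auto
    have "m = L + 2"
    proof (rule ccontr)
      assume "m \<noteq> L + 2"
      then have "m \<in> {n..L+1}" using m(1) by auto
      then show False using False m(2) adapted[of m x] by auto
    qed
    then show ?thesis using True m by (simp add: stopped_at_level_def)
  next
    case False
    then show ?thesis by (simp add: stopped_at_level_def)
  qed
  then have "next_expect r L (\<lambda>x. stopped_at_level Z n l (Suc L) (h @ [x]))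
      \<le> next_expect r L (\<lambda>x. Z (h @ [x]) (L + 2))"
    by (rule next_expect_mono[OF assms(1,2)])
  also have "\<dots> \<le> stopped_at_level Z n l L h"
    using super False by (simp add: stopped_at_level_def)
  finally show ?thesis .
qed

lemma hist_expect_maximal_ineq:
  assumes "0 \<le> r" "r \<le> 1" "1 \<le> n" "n \<le> L + 1"
    and nonneg: "\<And>h m. 0 \<le> Z h m"
    and adapted: "\<And>h x m. n \<le> length h + 1 \<Longrightarrow> m \<le> length h + 1 \<Longrightarrow> Z (h @ [x]) m = Z h m"
    and super: "\<And>j h. n \<le> j + 1 \<Longrightarrow> h \<in> histories j \<Longrightarrow>
                  next_expect r j (\<lambda>x. Z (h @ [x]) (j + 2)) \<le> Z h (j + 1)"
  shows "l * hist_expect r L (\<lambda>h. if \<exists>m\<in>{n..L+1}. l \<le> Z h m then 1 else 0)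
       \<le> hist_expect r (n - 1) (\<lambda>h. Z h n)"
proof -
  let ?Y = "stopped_at_level Z n l"
  have "l * hist_expect r L (\<lambda>h. if \<exists>m\<in>{n..L+1}. l \<le> Z h m then 1 else 0) \<le> hist_expect r L (?Y L)"
    unfolding hist_expect_cmult[symmetric]
    by (rule hist_expect_mono[OF assms(1,2)]) (simp add: stopped_at_level_def nonneg)
  also have "\<dots> \<le> hist_expect r (n - 1) (?Y (n - 1))"
    using assms(4) unfolding le_diff_conv[symmetric]
  proof (induction L rule: dec_induct)
    case (step L')
    have "hist_expect r (Suc L') (?Y (Suc L')) \<le> hist_expect r L' (?Y L')"
      unfolding hist_expect_Suc
      using step.hyps assms(3)
      by (intro hist_expect_mono[OF assms(1,2)] next_expect_stopped_at_level_le[OF assms(1,2)] super)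
        (auto simp: length_histories adapted)
    then show ?case using step.IH by simp
  qed simp
  also have "\<dots> \<le> hist_expect r (n - 1) (\<lambda>h. Z h n)"
    using assms(3) by (intro hist_expect_mono[OF assms(1,2)]) (simp add: stopped_at_level_def)
  finally show ?thesis .
qed

lemma hist_expect_oscillation_le:
  assumes "1 \<le> k" "k \<le> n" "n \<le> L + 1" "0 \<le> r" "r \<le> 1" "0 < e"
  shows "hist_expect r L (\<lambda>h. if \<exists>m\<in>{n..L+1}. e \<le> \<bar>hshare k h m - hshare k h n\<bar> then 1 else 0)
       \<le> hist_expect r (n - 1) (\<lambda>h. 1 / hcount h {1..k} n) / e\<^sup>2"
proof -
  have "e\<^sup>2 * hist_expect r L (\<lambda>h. if \<exists>m\<in>{n..L+1}. e \<le> \<bar>hshare k h m - hshare k h n\<bar> then 1 else 0)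
      \<le> e\<^sup>2 * hist_expect r L (\<lambda>h. if \<exists>m\<in>{n..L+1}. e\<^sup>2 \<le> hmart k n h m then 1 else 0)"
  proof (intro mult_left_mono hist_expect_mono[OF assms(4,5)])
    fix h
    have "e\<^sup>2 \<le> hmart k n h m" if "e \<le> \<bar>hshare k h m - hshare k h n\<bar>" for m
    proof -
      have "e\<^sup>2 \<le> \<bar>hshare k h m - hshare k h n\<bar>\<^sup>2"
        using that assms(6) by (intro power_mono) auto
      then show ?thesis
        using sq_hshare_diff_le_hmart[OF assms(1), of h m n] by simp
    qed
    then show "(if \<exists>m\<in>{n..L+1}. e \<le> \<bar>hshare k h m - hshare k h n\<bar> then 1 else 0)
        \<le> (if \<exists>m\<in>{n..L+1}. e\<^sup>2 \<le> hmart k n h m then 1 else (0::real))"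
      by auto
  qed simp
  also have "\<dots> \<le> hist_expect r (n - 1) (\<lambda>h. hmart k n h n)"
    using assms
    by (intro hist_expect_maximal_ineq hmart_nonneg hmart_append eq_refl[OF next_expect_hmart])
      (auto simp: length_histories)
  also have "\<dots> \<le> hist_expect r (n - 1) (\<lambda>h. 1 / hcount h {1..k} n)"
  proof (rule hist_expect_mono[OF assms(4,5)])
    fix h
    have "1 \<le> hcount h {1..k} n" using assms by (simp add: hcount_ge_1)
    then show "hmart k n h n \<le> 1 / hcount h {1..k} n"
      using assms(1)
      by (simp add: hmart_def mart_def hshare_def mart_corr_le hcount_nonneg hcount_mono)
  qed
  finally show ?thesis
    using assms(6) by (simp add: field_simps)
qed

lemma sum_inverse_le_ln_diff:
  assumes "2 \<le> k" "k \<le> N"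
  shows "(\<Sum>m=k..<N. 1 / real m) \<le> ln (real N - 1) - ln (real k - 1)"
  using assms(2)
proof (induction N rule: dec_induct)
  case (step n)
  have "2 \<le> n" using assms step.hyps by linarith
  then have "ln ((real n - 1) / real n) \<le> (real n - 1) / real n - 1"
    by (intro ln_le_minus_one) auto
  also have "\<dots> = - (1 / real n)" using \<open>2 \<le> n\<close> by (simp add: field_simps)
  finally have "1 / real n \<le> ln (real n) - ln (real n - 1)"
    using \<open>2 \<le> n\<close> by (simp add: ln_div)
  then show ?case using step.IH step.hyps by (simp add: sum.atLeastLessThan_Suc)
qed simp

lemma ln_diff_le_sum_inverse:
  assumes "1 \<le> k" "k \<le> N"
  shows "ln (real N) - ln (real k) \<le> (\<Sum>m=k..<N. 1 / real m)"
  using assms(2)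
proof (induction N rule: dec_induct)
  case (step n)
  have "1 \<le> n" using assms step.hyps by linarith
  then have "1 + 1 / real n = real (Suc n) / real n" by (simp add: field_simps)
  then have "ln (real (Suc n)) - ln (real n) = ln (1 + 1 / real n)"
    using \<open>1 \<le> n\<close> by (simp add: ln_div)
  also have "\<dots> \<le> 1 / real n"
    using \<open>1 \<le> n\<close> by (intro ln_add_one_self_le_self) auto
  finally show ?case using step.IH step.hyps by (simp add: sum.atLeastLessThan_Suc)
qed simp

lemma prod_one_plus_le_powr:
  assumes "2 \<le> k" "k \<le> N" "0 \<le> s" "s \<le> 1"
  shows "(\<Prod>m=k..<N. 1 + s / real m) \<le> 2 * (real N / real k) powr s"
proof -
  have k: "1 < real k" using assms by auto
  have "(\<Prod>m=k..<N. 1 + s / real m) \<le> (\<Prod>m=k..<N. exp (s / real m))"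
    by (intro prod_mono conjI exp_ge_add_one_self) (use assms in auto)
  also have "\<dots> = exp (s * (\<Sum>m=k..<N. 1 / real m))"
    by (simp add: exp_sum[symmetric] sum_distrib_left)
  also have "\<dots> \<le> exp (s * (ln (real N - 1) - ln (real k - 1)))"
    using sum_inverse_le_ln_diff[OF assms(1,2)] assms by (intro exp_mono mult_left_mono) auto
  also have "\<dots> = ((real N - 1) / (real k - 1)) powr s"
    using assms k by (simp add: powr_def ln_div)
  also have "\<dots> \<le> (2 * (real N / real k)) powr s"
  proof (rule powr_mono2)
    have "2 * real N / real k \<le> real N + 1"
      using k assms mult_right_mono[of 2 "real k" "real N + 1"] by (simp add: divide_le_eq algebra_simps)
    then have "real N - 1 \<le> 2 * (real N / real k) * (real k - 1)"
      using k by (simp add: field_simps)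
    then show "(real N - 1) / (real k - 1) \<le> 2 * (real N / real k)"
      using k by (simp add: pos_divide_le_eq)
  qed (use assms k in auto)
  also have "\<dots> = 2 powr s * (real N / real k) powr s"
    using k by (intro powr_mult)
  also have "\<dots> \<le> 2 * (real N / real k) powr s"
    using powr_mono[of s 1 2] assms by (intro mult_right_mono) auto
  finally show ?thesis .
qed

lemma prod_one_minus_le_powr:
  assumes "1 \<le> k" "k \<le> n" "0 \<le> c" "c \<le> 1"
  shows "(\<Prod>m=k..<n. 1 - c / real m) \<le> (real k / real n) powr c"
proof -
  have "(\<Prod>m=k..<n. 1 - c / real m) \<le> (\<Prod>m=k..<n. exp (- (c / real m)))"
  proof (intro prod_mono conjI)
    fix m assume "m \<in> {k..<n}"
    then have "1 \<le> real m" using assms by auto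
    then show "0 \<le> 1 - c / real m" using assms by (simp add: field_simps)
    show "1 - c / real m \<le> exp (- (c / real m))"
      using exp_ge_add_one_self[of "- (c / real m)"] by simp
  qed
  also have "\<dots> = exp (- c * (\<Sum>m=k..<n. 1 / real m))"
    by (simp add: exp_sum[symmetric] sum_distrib_left sum_negf)
  also have "\<dots> \<le> exp (- c * (ln (real n) - ln (real k)))"
    using ln_diff_le_sum_inverse[OF assms(1,2)] assms by (intro exp_mono) (simp add: mult_left_mono)
  also have "\<dots> = (real k / real n) powr c"
    using assms by (simp add: powr_def ln_div algebra_simps)
  finally show ?thesis .
qed

lemma powr_ratio_div_square:
  fixes x y s :: real
  assumes "0 < x" "0 < y"
  shows "(x / y) powr (1 - s) / x\<^sup>2 = 1 / (x powr (1 + s) * y powr (1 - s))"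
proof -
  have "x powr (1 + s) * x powr (1 - s) = x powr (2::real)"
    by (simp add: powr_add[symmetric])
  then have "x\<^sup>2 = x powr (1 + s) * x powr (1 - s)"
    using assms by (simp add: powr_numeral)
  then show ?thesis
    using assms by (simp add: powr_divide field_simps)
qed

lemma divide_bounds_01: "0 \<le> b \<Longrightarrow> b \<le> a \<Longrightarrow> 0 \<le> b / a \<and> b / a \<le> (1::real)"
  by (cases "a = 0") (auto simp: divide_le_eq_1)

context prob_space
begin

lemma prob_Ex_ge_le:
  fixes P :: "nat \<Rightarrow> 'a \<Rightarrow> bool"
  assumes sets: "\<And>m. {\<omega> \<in> space M. P m \<omega>} \<in> sets M"
    and bound: "\<And>L. n \<le> L \<Longrightarrow> prob {\<omega> \<in> space M. \<exists>m\<in>{n..L}. P m \<omega>} \<le> B"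
  shows "prob {\<omega> \<in> space M. \<exists>m\<ge>n. P m \<omega>} \<le> B"
proof -
  define A where "A L = {\<omega> \<in> space M. \<exists>m\<in>{n..L}. P m \<omega>}" for L
  have "A L \<in> sets M" for L
  proof -
    have "A L = (\<Union>m\<in>{n..L}. {\<omega> \<in> space M. P m \<omega>})" by (auto simp: A_def)
    also have "\<dots> \<in> sets M" using sets by (intro sets.finite_UN) simp_all
    finally show ?thesis .
  qed
  then have "range A \<subseteq> sets M" by auto
  moreover have "incseq A"
    by (rule incseq_SucI) (auto simp: A_def)
  ultimately have "(\<lambda>L. prob (A L)) \<longlonglongrightarrow> prob (\<Union>L. A L)"
    by (rule finite_Lim_measure_incseq)
  moreover have "(\<Union>L. A L) = {\<omega> \<in> space M. \<exists>m\<ge>n. P m \<omega>}"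
    by (auto simp: A_def intro: atLeastAtMost_iff[THEN iffD2])
  ultimately show ?thesis
    using bound eventually_ge_at_top[of n]
    by (metis (mono_tags, lifting) A_def eventually_mono tendsto_upperbound trivial_limit_sequentially)
qed

lemma AE_convergent_of_oscillation:
  fixes Y :: "nat \<Rightarrow> 'a \<Rightarrow> real"
  assumes [measurable]: "\<And>m. Y m \<in> borel_measurable M"
    and osc: "\<And>e. 0 < e \<Longrightarrow> (\<lambda>n. prob {\<omega> \<in> space M. \<exists>m\<ge>n. e \<le> \<bar>Y m \<omega> - Y n \<omega>\<bar>}) \<longlonglongrightarrow> 0"
  shows "AE \<omega> in M. convergent (\<lambda>m. Y m \<omega>)"
proof -
  define F where "F j = {\<omega> \<in> space M. \<forall>n. \<exists>m\<ge>n. 1 / real (Suc j) \<le> \<bar>Y m \<omega> - Y n \<omega>\<bar>}" for j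
  have "F j \<in> null_sets M" for j
  proof -
    have "prob (F j) \<le> prob {\<omega> \<in> space M. \<exists>m\<ge>n. 1 / real (Suc j) \<le> \<bar>Y m \<omega> - Y n \<omega>\<bar>}" for n
      by (rule finite_measure_mono) (auto simp: F_def)
    then have "prob (F j) \<le> 0"
      using osc[of "1 / real (Suc j)"] by (intro tendsto_lowerbound) auto
    moreover have "F j \<in> sets M" unfolding F_def by measurable
    ultimately show ?thesis
      by (simp add: null_sets_def emeasure_eq_measure measure_le_0_iff)
  qed
  then have "AE \<omega> in M. \<forall>j. \<omega> \<notin> F j"
    by (subst AE_all_countable) (blast intro: AE_not_in)
  then show ?thesis
    using AE_space
  proof eventually_elim
    case (elim \<omega>)
    then have \<omega>: "\<omega> \<in> space M" and notF: "\<forall>j. \<omega> \<notin> F j" by auto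
    show "convergent (\<lambda>m. Y m \<omega>)"
    proof (rule Cauchy_convergent, rule CauchyI)
      fix e :: real assume "0 < e"
      then obtain j where j: "1 / real (Suc j) < e / 2"
        using reals_Archimedean[of "e / 2"] by (auto simp: inverse_eq_divide)
      have "\<omega> \<notin> F j" using notF by blast
      then obtain n0 where "\<forall>m\<ge>n0. \<not> 1 / real (Suc j) \<le> \<bar>Y m \<omega> - Y n0 \<omega>\<bar>"
        using \<omega> unfolding F_def by blast
      then have n0: "\<And>m. n0 \<le> m \<Longrightarrow> \<bar>Y m \<omega> - Y n0 \<omega>\<bar> < 1 / real (Suc j)"
        by (simp add: not_le)
      have "norm (Y m \<omega> - Y n \<omega>) < e" if "n0 \<le> m" "n0 \<le> n" for m n
        using n0[OF that(1)] n0[OF that(2)] j by simp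
      then show "\<exists>M0. \<forall>m\<ge>M0. \<forall>n\<ge>M0. norm (Y m \<omega> - Y n \<omega>) < e" by blast
    qed
  qed
qed

lemma integral_finite_valued:
  fixes X :: "'a \<Rightarrow> 'b::countable" and G :: "'b \<Rightarrow> real"
  assumes X: "X \<in> measurable M (count_space UNIV)" and "finite S" and AE_S: "AE \<omega> in M. X \<omega> \<in> S"
  shows "(\<integral>\<omega>. G (X \<omega>) \<partial>M) = (\<Sum>x\<in>S. G x * prob {\<omega> \<in> space M. X \<omega> = x})"
proof -
  let ?A = "\<lambda>x. {\<omega> \<in> space M. X \<omega> = x}"
  have A: "?A x \<in> sets M" for x
    using measurable_sets[OF X, of "{x}"] by (simp add: vimage_def Int_def conj_commute)
  have "(\<integral>\<omega>. G (X \<omega>) \<partial>M) = (\<integral>\<omega>. (\<Sum>x\<in>S. G x * indicator (?A x) \<omega>) \<partial>M)"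
  proof (rule integral_cong_AE)
    show "AE \<omega> in M. G (X \<omega>) = (\<Sum>x\<in>S. G x * indicator (?A x) \<omega>)"
      using AE_S AE_space
    proof eventually_elim
      case (elim \<omega>)
      then have "(\<Sum>x\<in>S. G x * indicator (?A x) \<omega>) = (\<Sum>x\<in>S. if X \<omega> = x then G x else 0)"
        by (intro sum.cong) (auto simp: indicator_def)
      also have "\<dots> = G (X \<omega>)" using elim \<open>finite S\<close> by simp
      finally show ?case by simp
    qed
  qed (use X A in measurable)
  also have "\<dots> = (\<Sum>x\<in>S. \<integral>\<omega>. G x * indicator (?A x) \<omega> \<partial>M)"
    using A by (intro Bochner_Integration.integral_sum integrable_mult_right integrable_real_indicator)
      (auto simp: emeasure_eq_measure)
  also have "\<dots> = (\<Sum>x\<in>S. G x * prob (?A x))"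
    using A by simp
  finally show ?thesis .
qed

lemma integral_le_of_AE_tendsto_bounded:
  fixes f :: "nat \<Rightarrow> 'a \<Rightarrow> real" and g :: "'a \<Rightarrow> real"
  assumes [measurable]: "\<And>i. f i \<in> borel_measurable M" "g \<in> borel_measurable M"
    and lim: "AE \<omega> in M. (\<lambda>i. f i \<omega>) \<longlonglongrightarrow> g \<omega>"
    and bounded: "\<And>i \<omega>. \<bar>f i \<omega>\<bar> \<le> C"
    and le: "eventually (\<lambda>i. integral\<^sup>L M (f i) \<le> B) sequentially"
  shows "integral\<^sup>L M g \<le> B"
proof -
  have "(\<lambda>i. integral\<^sup>L M (f i)) \<longlonglongrightarrow> integral\<^sup>L M g"
    by (rule integral_dominated_convergence[where w="\<lambda>_. C"]) (use lim bounded in auto)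
  then show ?thesis using le by (rule tendsto_upperbound) simp
qed

end

section \<open>The jump chain on a probability space\<close>

locale yule_chain = prob_space M for M :: "'a measure" +
  fixes r :: real and par :: "nat \<Rightarrow> 'a \<Rightarrow> nat" and mut :: "nat \<Rightarrow> 'a \<Rightarrow> bool"
  assumes r_pos: "0 < r" and r_less_1: "r < 1"
    and indep: "indep_vars (\<lambda>_. count_space UNIV) (\<lambda>n \<omega>. (par n \<omega>, mut n \<omega>)) {2..}"
    and distr: "\<And>n. n \<ge> 2 \<Longrightarrow> distr M (count_space UNIV) (\<lambda>\<omega>. (par n \<omega>, mut n \<omega>)) =
                  measure_pmf (pair_pmf (pmf_of_set {1..n-1}) (bernoulli_pmf r))"
begin

definition hist :: "nat \<Rightarrow> 'a \<Rightarrow> (nat \<times> bool) list" where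
  "hist L \<omega> = map (\<lambda>n. (par n \<omega>, mut n \<omega>)) [2..<L+2]"

lemma length_hist [simp]: "length (hist L \<omega>) = L"
  by (simp add: hist_def del: upt_Suc)

lemma hist_nth: "i < L \<Longrightarrow> hist L \<omega> ! i = (par (i + 2) \<omega>, mut (i + 2) \<omega>)"
  unfolding hist_def by (subst nth_map_upt) (auto simp: add.commute)

lemma hist_eq_iff: "hist L \<omega> = h \<longleftrightarrow> length h = L \<and> (\<forall>i<L. (par (i + 2) \<omega>, mut (i + 2) \<omega>) = h ! i)"
  by (auto simp: list_eq_iff_nth_eq hist_nth)

lemma hpar_hmut_hist:
  assumes "2 \<le> n" "n \<le> L + 1"
  shows "hpar (hist L \<omega>) n = par n \<omega> \<and> hmut (hist L \<omega>) n = mut n \<omega>"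
proof -
  have "n - 2 < L" "n - 2 + 2 = n" using assms by auto
  then show ?thesis using hist_nth[of "n - 2" L \<omega>] by (simp add: hpar_def hmut_def)
qed

lemma hcount_hist:
  assumes "m \<le> L + 1"
  shows "hcount (hist L \<omega>) T m = real (type_count (\<lambda>n. par n \<omega>) (\<lambda>n. mut n \<omega>) T m)"
proof -
  have "type_count (hpar (hist L \<omega>)) (hmut (hist L \<omega>)) T m = type_count (\<lambda>n. par n \<omega>) (\<lambda>n. mut n \<omega>) T m"
    by (rule type_count_cong) (use assms hpar_hmut_hist in auto)
  then show ?thesis by (simp add: hcount_def)
qed

lemma Vfrac_hist:
  "m \<le> L + 1 \<Longrightarrow> Vfrac (\<lambda>n. par n \<omega>) (\<lambda>n. mut n \<omega>) k m = hshare k (hist L \<omega>) m"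
  by (simp add: Vfrac_eq_type_count hshare_def hcount_hist)

lemma Xfrac_hist:
  "m \<le> L + 1 \<Longrightarrow> Xfrac (\<lambda>n. par n \<omega>) (\<lambda>n. mut n \<omega>) k m = hcount (hist L \<omega>) {1..k} m / real m"
  by (simp add: Xfrac_eq_type_count hcount_hist)

lemma measurable_birth: "2 \<le> n \<Longrightarrow> (\<lambda>\<omega>. (par n \<omega>, mut n \<omega>)) \<in> measurable M (count_space UNIV)"
  using indep unfolding indep_vars_def by auto

lemma prob_birth:
  assumes "2 \<le> n"
  shows "prob ((\<lambda>\<omega>. (par n \<omega>, mut n \<omega>)) -` {x} \<inter> space M) = birth_prob r n x"
proof -
  have "prob ((\<lambda>\<omega>. (par n \<omega>, mut n \<omega>)) -` {x} \<inter> space M)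
      = pmf (pair_pmf (pmf_of_set {1..n-1}) (bernoulli_pmf r)) x"
    using measure_distr[OF measurable_birth[OF assms], of "{x}"] distr[OF assms]
    by (simp add: measure_pmf_single)
  also have "\<dots> = birth_prob r n x"
    using r_pos r_less_1 assms by (cases x) (auto simp: pmf_pair birth_prob_def)
  finally show ?thesis .
qed

lemma hist_event_eq:
  assumes "length h = L" "1 \<le> L"
  shows "{\<omega> \<in> space M. hist L \<omega> = h}
       = (\<Inter>n\<in>{2..L+1}. (\<lambda>\<omega>. (par n \<omega>, mut n \<omega>)) -` {h ! (n - 2)} \<inter> space M)"
proof -
  have "(\<forall>i<L. (par (i + 2) \<omega>, mut (i + 2) \<omega>) = h ! i)
      \<longleftrightarrow> (\<forall>n\<in>{2..L+1}. (par n \<omega>, mut n \<omega>) = h ! (n - 2))" for \<omega>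
  proof (intro iffI ballI allI impI)
    fix n assume all: "\<forall>i<L. (par (i + 2) \<omega>, mut (i + 2) \<omega>) = h ! i" and "n \<in> {2..L+1}"
    then have "n - 2 < L" "n - 2 + 2 = n" by auto
    then show "(par n \<omega>, mut n \<omega>) = h ! (n - 2)" using all by metis
  next
    fix i assume all: "\<forall>n\<in>{2..L+1}. (par n \<omega>, mut n \<omega>) = h ! (n - 2)" and "i < L"
    then show "(par (i + 2) \<omega>, mut (i + 2) \<omega>) = h ! i" using all[rule_format, of "i + 2"] by simp
  qed
  then show ?thesis using assms by (auto simp: hist_eq_iff)
qed

lemma hist_event_sets: "{\<omega> \<in> space M. hist L \<omega> = h} \<in> sets M"
proof -
  consider "length h \<noteq> L" | "length h = L" "L = 0" | "length h = L" "1 \<le> L" by linarith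
  then show ?thesis
  proof cases
    case 1
    then have "{\<omega> \<in> space M. hist L \<omega> = h} = {}" by auto
    then show ?thesis by (metis sets.empty_sets)
  next
    case 2
    then show ?thesis by (simp add: hist_def)
  next
    case 3
    then show ?thesis
      unfolding hist_event_eq[OF 3]
      by (intro sets.finite_INT measurable_sets[OF measurable_birth]) auto
  qed
qed

lemma measurable_hist: "hist L \<in> measurable M (count_space UNIV)"
  unfolding measurable_count_space_eq2_countable
  using hist_event_sets by (simp add: vimage_def Int_def conj_commute)

lemma prob_hist_eq:
  assumes "length h = L"
  shows "prob {\<omega> \<in> space M. hist L \<omega> = h} = hist_prob r h"
proof (cases "L = 0")
  case True
  then show ?thesis using assms by (simp add: hist_def hist_prob_def prob_space)
next
  case False
  then have "1 \<le> L" by simp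
  have "prob {\<omega> \<in> space M. hist L \<omega> = h}
      = (\<Prod>n\<in>{2..L+1}. prob ((\<lambda>\<omega>. (par n \<omega>, mut n \<omega>)) -` {h ! (n - 2)} \<inter> space M))"
    unfolding hist_event_eq[OF assms \<open>1 \<le> L\<close>]
    by (rule indep_varsD[OF indep, where A="\<lambda>n. {h ! (n - 2)}"]) (use \<open>1 \<le> L\<close> in auto)
  also have "\<dots> = (\<Prod>n\<in>{2..L+1}. birth_prob r n (h ! (n - 2)))"
    by (intro prod.cong refl prob_birth) auto
  also have "\<dots> = (\<Prod>i<L. birth_prob r (i + 2) (h ! i))"
    by (rule prod.reindex_bij_witness[where i="\<lambda>i. i + 2" and j="\<lambda>n. n - 2"])
      (auto simp: le_add_diff_inverse2 simp del: add_2_eq_Suc')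
  finally show ?thesis using assms by (simp add: hist_prob_def)
qed

lemma AE_hist_histories: "AE \<omega> in M. hist L \<omega> \<in> histories L"
proof -
  have "prob (\<Union>h\<in>histories L. {\<omega> \<in> space M. hist L \<omega> = h})
      = (\<Sum>h\<in>histories L. prob {\<omega> \<in> space M. hist L \<omega> = h})"
    by (rule finite_measure_finite_Union)
      (auto simp: finite_histories hist_event_sets disjoint_family_on_def)
  also have "\<dots> = hist_expect r L (\<lambda>_. 1)"
    by (simp add: hist_expect_def prob_hist_eq length_histories del: hist_expect_const)
  also have "\<dots> = 1" by simp
  finally have "AE \<omega> in M. \<omega> \<in> (\<Union>h\<in>histories L. {\<omega> \<in> space M. hist L \<omega> = h})"
    by (intro AE_prob_1) simp
  then show ?thesis by eventually_elim auto
qed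

lemma integral_hist: "(\<integral>\<omega>. G (hist L \<omega>) \<partial>M) = hist_expect r L G"
  unfolding integral_finite_valued[OF measurable_hist finite_histories AE_hist_histories]
  by (simp add: hist_expect_def prob_hist_eq length_histories mult.commute)

lemma prob_hist_event: "prob {\<omega> \<in> space M. P (hist L \<omega>)} = hist_expect r L (\<lambda>h. if P h then 1 else 0)"
proof -
  have "{\<omega> \<in> space M. P (hist L \<omega>)} \<in> sets M"
    using measurable_sets[OF measurable_hist, of "{h. P h}"] by (simp add: vimage_def Int_def conj_commute)
  then have "prob {\<omega> \<in> space M. P (hist L \<omega>)} = (\<integral>\<omega>. indicator {\<omega> \<in> space M. P (hist L \<omega>)} \<omega> \<partial>M)"
    by (simp add: Int_absorb2)
  also have "\<dots> = (\<integral>\<omega>. (if P (hist L \<omega>) then 1 else 0) \<partial>M)"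
    by (rule Bochner_Integration.integral_cong) (auto simp: indicator_def)
  finally show ?thesis by (simp add: integral_hist[of "\<lambda>h. if P h then 1 else 0"])
qed

definition V :: "nat \<Rightarrow> nat \<Rightarrow> 'a \<Rightarrow> real" where
  "V k m \<omega> = Vfrac (\<lambda>n. par n \<omega>) (\<lambda>n. mut n \<omega>) k m"

definition X :: "nat \<Rightarrow> nat \<Rightarrow> 'a \<Rightarrow> real" where
  "X k m \<omega> = Xfrac (\<lambda>n. par n \<omega>) (\<lambda>n. mut n \<omega>) k m"

lemma V_eq_hshare: "m \<le> L + 1 \<Longrightarrow> V k m \<omega> = hshare k (hist L \<omega>) m"
  by (simp add: V_def Vfrac_hist)

lemma X_eq_hcount: "m \<le> L + 1 \<Longrightarrow> X k m \<omega> = hcount (hist L \<omega>) {1..k} m / real m"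
  by (simp add: X_def Xfrac_hist)

lemma measurable_V [measurable]: "V k m \<in> borel_measurable M"
proof -
  have "V k m = (\<lambda>h. hshare k h m) \<circ> hist m" by (rule ext) (simp add: V_eq_hshare[of m m])
  then show ?thesis using measurable_comp[OF measurable_hist borel_measurable_count_space] by metis
qed

lemma measurable_X [measurable]: "X k m \<in> borel_measurable M"
proof -
  have "X k m = (\<lambda>h. hcount h {1..k} m / real m) \<circ> hist m" by (rule ext) (simp add: X_eq_hcount[of m m])
  then show ?thesis using measurable_comp[OF measurable_hist borel_measurable_count_space] by metis
qed

lemma V_bounds: "1 \<le> k \<Longrightarrow> 0 \<le> V k m \<omega> \<and> V k m \<omega> \<le> 1"
  unfolding V_def Vfrac_eq_type_count by (intro divide_bounds_01) (auto simp: type_count_mono)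

lemma X_bounds: "0 \<le> X k m \<omega> \<and> X k m \<omega> \<le> 1"
  unfolding X_def Xfrac_eq_type_count by (intro divide_bounds_01) (auto simp: type_count_le)

lemma integral_sq_dev_le:
  assumes "2 \<le> k" "k \<le> N" "N \<le> L"
  shows "(\<integral>\<omega>. (X k N \<omega>)\<^sup>2 * (V k L \<omega> - V k N \<omega>)\<^sup>2 \<partial>M)
       \<le> r * (2 * (real N / real k) powr (1 - r)) / (real N)\<^sup>2"
proof -
  let ?G = "\<lambda>h. (hcount h {1..k} N)\<^sup>2 * (hshare k h L - hshare k h N)\<^sup>2"
  have r: "0 \<le> r" "r \<le> 1" using r_pos r_less_1 by auto
  have "(\<integral>\<omega>. (X k N \<omega>)\<^sup>2 * (V k L \<omega> - V k N \<omega>)\<^sup>2 \<partial>M) = (\<integral>\<omega>. ?G (hist (L - 1) \<omega>) / (real N)\<^sup>2 \<partial>M)"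
    using assms by (intro Bochner_Integration.integral_cong)
      (simp_all add: X_eq_hcount[of N "L - 1"] V_eq_hshare[of _ "L - 1"] power_divide)
  also have "\<dots> = hist_expect r (L - 1) ?G / (real N)\<^sup>2"
    using integral_hist[of "\<lambda>h. ?G h / (real N)\<^sup>2"] hist_expect_cmult[of r _ "1 / (real N)\<^sup>2" ?G]
    by simp
  also have "\<dots> \<le> hist_expect r (N - 1) (\<lambda>h. hcount h {k} N) / (real N)\<^sup>2"
    using assms r by (intro divide_right_mono hist_expect_sq_dev_le) auto
  also have "\<dots> = r * (\<Prod>m=k..<N. 1 + (1 - r) / real m) / (real N)\<^sup>2"
    using hist_expect_count_type[OF assms(1,2), of r] by simp
  also have "\<dots> \<le> r * (2 * (real N / real k) powr (1 - r)) / (real N)\<^sup>2"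
    using assms r by (intro divide_right_mono mult_left_mono prod_one_plus_le_powr) auto
  finally show ?thesis .
qed

lemma prob_oscillation_le:
  assumes "1 \<le> k" "k \<le> n" "n \<le> L" "0 < e"
  shows "prob {\<omega> \<in> space M. \<exists>m\<in>{n..L}. e \<le> \<bar>V k m \<omega> - V k n \<omega>\<bar>}
       \<le> (real k / real n) powr ((1 - r) / 2) / (real k * e\<^sup>2)"
proof -
  let ?P = "\<lambda>h. \<exists>m\<in>{n..L - 1 + 1}. e \<le> \<bar>hshare k h m - hshare k h n\<bar>"
  have r: "0 \<le> r" "r \<le> 1" using r_pos r_less_1 by auto
  have L: "L - 1 + 1 = L" using assms by simp
  have "{\<omega> \<in> space M. \<exists>m\<in>{n..L}. e \<le> \<bar>V k m \<omega> - V k n \<omega>\<bar>} = {\<omega> \<in> space M. ?P (hist (L - 1) \<omega>)}"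
    using assms by (auto simp: L V_eq_hshare[of _ "L - 1"])
  then have "prob {\<omega> \<in> space M. \<exists>m\<in>{n..L}. e \<le> \<bar>V k m \<omega> - V k n \<omega>\<bar>}
      = hist_expect r (L - 1) (\<lambda>h. if ?P h then 1 else 0)"
    by (simp only: prob_hist_event[of ?P])
  also have "\<dots> \<le> hist_expect r (n - 1) (\<lambda>h. 1 / hcount h {1..k} n) / e\<^sup>2"
    using assms r by (intro hist_expect_oscillation_le) auto
  also have "\<dots> \<le> (\<Prod>m=k..<n. 1 - ((1 - r) / 2) / real m) / real k / e\<^sup>2"
    using hist_expect_inverse_count_le[of k n r] assms r by (intro divide_right_mono) auto
  also have "\<dots> \<le> (real k / real n) powr ((1 - r) / 2) / real k / e\<^sup>2"
    using assms r by (intro divide_right_mono prod_one_minus_le_powr) auto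
  finally show ?thesis by (simp add: field_simps)
qed

lemma AE_convergent_V:
  assumes "1 \<le> k"
  shows "AE \<omega> in M. convergent (\<lambda>m. V k m \<omega>)"
proof (rule AE_convergent_of_oscillation)
  fix e :: real assume "0 < e"
  let ?B = "\<lambda>n. (real k / real n) powr ((1 - r) / 2) / (real k * e\<^sup>2)"
  have "(\<lambda>n. (real k / real n) powr ((1 - r) / 2)) \<longlonglongrightarrow> 0"
    using r_less_1 by (intro tendsto_zero_powrI[OF lim_const_over_n tendsto_const]) simp_all
  then have lim: "?B \<longlonglongrightarrow> 0" by (rule tendsto_divide_zero)
  have bound: "eventually (\<lambda>n. prob {\<omega> \<in> space M. \<exists>m\<ge>n. e \<le> \<bar>V k m \<omega> - V k n \<omega>\<bar>} \<le> ?B n) sequentially"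
    using eventually_ge_at_top[of k]
  proof eventually_elim
    case (elim n)
    show ?case
    proof (rule prob_Ex_ge_le)
      show "{\<omega> \<in> space M. e \<le> \<bar>V k m \<omega> - V k n \<omega>\<bar>} \<in> sets M" for m
        by measurable
      show "prob {\<omega> \<in> space M. \<exists>m\<in>{n..L}. e \<le> \<bar>V k m \<omega> - V k n \<omega>\<bar>} \<le> ?B n" if "n \<le> L" for L
        by (rule prob_oscillation_le) (use assms elim \<open>0 < e\<close> that in auto)
    qed
  qed
  show "(\<lambda>n. prob {\<omega> \<in> space M. \<exists>m\<ge>n. e \<le> \<bar>V k m \<omega> - V k n \<omega>\<bar>}) \<longlonglongrightarrow> 0"
    by (rule tendsto_sandwich[OF _ bound tendsto_const lim]) simp
qed (rule measurable_V)

lemma integral_sq_dev_limit_le: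
  assumes "2 \<le> k" "k \<le> N"
  shows "(\<integral>\<omega>. (X k N \<omega>)\<^sup>2 * (lim (\<lambda>m. V k m \<omega>) - V k N \<omega>)\<^sup>2 \<partial>M)
       \<le> r * (2 / (real N powr (1 + r) * real k powr (1 - r)))"
proof -
  have "1 \<le> k" using assms by simp
  have "(\<integral>\<omega>. (X k N \<omega>)\<^sup>2 * (lim (\<lambda>m. V k m \<omega>) - V k N \<omega>)\<^sup>2 \<partial>M)
      \<le> r * (2 * (real N / real k) powr (1 - r)) / (real N)\<^sup>2"
  proof (rule integral_le_of_AE_tendsto_bounded[where C=1])
    show "AE \<omega> in M. (\<lambda>m. (X k N \<omega>)\<^sup>2 * (V k m \<omega> - V k N \<omega>)\<^sup>2)
        \<longlonglongrightarrow> (X k N \<omega>)\<^sup>2 * (lim (\<lambda>m. V k m \<omega>) - V k N \<omega>)\<^sup>2"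
      using AE_convergent_V[OF \<open>1 \<le> k\<close>]
      by eventually_elim (auto intro!: tendsto_intros simp: convergent_LIMSEQ_iff)
    show "\<bar>(X k N \<omega>)\<^sup>2 * (V k m \<omega> - V k N \<omega>)\<^sup>2\<bar> \<le> 1" for m \<omega>
    proof -
      have "(X k N \<omega>)\<^sup>2 \<le> 1" using X_bounds[of k N \<omega>] by (simp add: power_le_one)
      moreover have "(V k m \<omega> - V k N \<omega>)\<^sup>2 \<le> 1"
        using V_bounds[OF \<open>1 \<le> k\<close>, of m \<omega>] V_bounds[OF \<open>1 \<le> k\<close>, of N \<omega>]
        by (simp add: abs_square_le_1 abs_le_iff)
      ultimately show ?thesis by (simp add: mult_le_one)
    qed
    show "eventually (\<lambda>m. (\<integral>\<omega>. (X k N \<omega>)\<^sup>2 * (V k m \<omega> - V k N \<omega>)\<^sup>2 \<partial>M)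
        \<le> r * (2 * (real N / real k) powr (1 - r)) / (real N)\<^sup>2) sequentially"
      using eventually_ge_at_top[of N] by eventually_elim (rule integral_sq_dev_le[OF assms])
  qed measurable
  also have "\<dots> = 2 * r * ((real N / real k) powr (1 - r) / (real N)\<^sup>2)"
    by simp
  also have "\<dots> = r * (2 / (real N powr (1 + r) * real k powr (1 - r)))"
    using powr_ratio_div_square[of "real N" "real k" r] assms by simp
  finally show ?thesis .
qed

end

theorem lemma3p3:
  fixes M :: "'a measure" and r :: real
    and par :: "nat \<Rightarrow> 'a \<Rightarrow> nat" and mut :: "nat \<Rightarrow> 'a \<Rightarrow> bool"
    and N k :: nat
  assumes "prob_space M"
    and "0 < r" and "r < 1"
    and indep: "prob_space.indep_vars M (\<lambda>_. count_space UNIV)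
                  (\<lambda>n \<omega>. (par n \<omega>, mut n \<omega>)) {2..}"
    and distr: "\<And>n. n \<ge> 2 \<Longrightarrow>
                  distr M (count_space UNIV) (\<lambda>\<omega>. (par n \<omega>, mut n \<omega>)) =
                  measure_pmf (pair_pmf (pmf_of_set {1..n-1}) (bernoulli_pmf r))"
    and "2 \<le> N" and "2 \<le> k" and "k \<le> N"
  shows "(\<integral>\<omega>. (Xfrac (\<lambda>n. par n \<omega>) (\<lambda>n. mut n \<omega>) k N)\<^sup>2 *
              (Wlim (\<lambda>n. par n \<omega>) (\<lambda>n. mut n \<omega>) k
               - Vfrac (\<lambda>n. par n \<omega>) (\<lambda>n. mut n \<omega>) k N)\<^sup>2 \<partial>M)
         \<le> r * (1 / (real N)\<^sup>2 + 2 / (real N powr (1 + r) * real k powr (1 - r)))"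
proof -
  interpret yule_chain M r par mut
    using assms by (intro yule_chain.intro yule_chain_axioms.intro) auto
  have "(\<integral>\<omega>. (Xfrac (\<lambda>n. par n \<omega>) (\<lambda>n. mut n \<omega>) k N)\<^sup>2 *
              (Wlim (\<lambda>n. par n \<omega>) (\<lambda>n. mut n \<omega>) k - Vfrac (\<lambda>n. par n \<omega>) (\<lambda>n. mut n \<omega>) k N)\<^sup>2 \<partial>M)
      = (\<integral>\<omega>. (X k N \<omega>)\<^sup>2 * (lim (\<lambda>m. V k m \<omega>) - V k N \<omega>)\<^sup>2 \<partial>M)"
    by (simp add: X_def V_def Wlim_def)
  also have "\<dots> \<le> r * (2 / (real N powr (1 + r) * real k powr (1 - r)))"
    using assms by (intro integral_sq_dev_limit_le)
  also have "\<dots> \<le> r * (1 / (real N)\<^sup>2 + 2 / (real N powr (1 + r) * real k powr (1 - r)))"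
    using assms by (intro mult_left_mono) auto
  finally show ?thesis .
qed

end
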